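(* Let $S\subseteq\{0,1\}^n$ and $f:S\to\{0,1\}$. Then for any $\epsilon<1/2$, $$\mathsf{L}^{\epsilon}(f)\ \ge\ \big((1-2\epsilon)\,\mathsf{sumPI}(f)\big)^2.$$
   Context: For $g:S\to\{0,1\}$ with $S\subseteq\{0,1\}^n$, $\mathsf{L}(g)$ denotes the minimum number of leaves of a formula over $\{\wedge,\vee\}$ with literals $x_i,\neg x_i$ at the leaves that agrees with $g$ on $S$. A function $f:S\to\{0,1\}$ is $\epsilon$-approximated by a set of functions $\{f_j\}_{j\in J}$, $f_j:S\to\{0,1\}$, if there is a probability distribution $\alpha$ on $J$ such that for every $x\in S$, $\Pr_{j\sim\alpha}[f(x)=f_j(x)]\ge 1-\epsilon$. $\mathsf{L}^\epsilon(f)$ is the least $s$ such that $f$ is $\epsilon$-approximated by a set of functions $\{f_j\}$ with $\max_j \mathsf{L}(f_j)\le s$. With $p=\{p_x:x\in S\}$ ranging over families of probability distributions on $[n]$, $$\mathsf{sumPI}(f)=\min_{p}\ \max_{x,y\in S:\ f(x)\neq f(y)} \frac{1}{\sum_{i:\,x_i\neq y_i}\sqrt{p_x(i)p_y(i)}}.$$ *)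

theory Defs
  imports "HOL-Probability.Probability"
begin

text \<open>Points of the Boolean cube: bool lists of length n; coordinate i (0-based, i < n) is x ! i.\<close>

datatype form = Lit nat bool | FAnd form form | FOr form form

fun evalf :: "form \<Rightarrow> bool list \<Rightarrow> bool" where
  "evalf (Lit i b) x = (if b then x ! i else \<not> x ! i)"
| "evalf (FAnd a c) x = (evalf a x \<and> evalf c x)"
| "evalf (FOr a c) x = (evalf a x \<or> evalf c x)"

fun leaves :: "form \<Rightarrow> nat" where
  "leaves (Lit i b) = 1"
| "leaves (FAnd a c) = leaves a + leaves c"
| "leaves (FOr a c) = leaves a + leaves c"

fun vars :: "form \<Rightarrow> nat set" where
  "vars (Lit i b) = {i}"
| "vars (FAnd a c) = vars a \<union> vars c"
| "vars (FOr a c) = vars a \<union> vars c"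

text \<open>Formula size L(g) on S (infinity if no formula exists).\<close>
definition formL :: "nat \<Rightarrow> bool list set \<Rightarrow> (bool list \<Rightarrow> bool) \<Rightarrow> enat" where
  "formL n S g = Inf {enat (leaves \<phi>) | \<phi>. (\<forall>i\<in>vars \<phi>. i < n) \<and> (\<forall>x\<in>S. evalf \<phi> x = g x)}"

text \<open>Approximate formula size L^eps(f): a distribution alpha over functions (the pushforward
  of the distribution on the index set J).\<close>
definition formLeps :: "nat \<Rightarrow> bool list set \<Rightarrow> real \<Rightarrow> (bool list \<Rightarrow> bool) \<Rightarrow> enat" where
  "formLeps n S \<epsilon> f = Inf {enat s | s. \<exists>\<alpha> :: (bool list \<Rightarrow> bool) pmf.
      (\<forall>g\<in>set_pmf \<alpha>. formL n S g \<le> enat s) \<and>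
      (\<forall>x\<in>S. measure_pmf.prob \<alpha> {g. f x = g x} \<ge> 1 - \<epsilon>)}"

definition pairval :: "nat \<Rightarrow> (bool list \<Rightarrow> nat \<Rightarrow> real) \<Rightarrow> bool list \<Rightarrow> bool list \<Rightarrow> ereal" where
  "pairval n p x y = (let s = (\<Sum>i\<in>{i. i < n \<and> x ! i \<noteq> y ! i}. sqrt (p x i * p y i))
                       in if s = 0 then \<infinity> else ereal (1 / s))"

definition prob_family :: "nat \<Rightarrow> bool list set \<Rightarrow> (bool list \<Rightarrow> nat \<Rightarrow> real) \<Rightarrow> bool" where
  "prob_family n S p \<longleftrightarrow> (\<forall>x\<in>S. (\<forall>i<n. p x i \<ge> 0) \<and> (\<Sum>i<n. p x i) = 1)"

text \<open>sumPI(f); the max over an empty set of pairs is taken to be 0.\<close>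
definition sumPI :: "nat \<Rightarrow> bool list set \<Rightarrow> (bool list \<Rightarrow> bool) \<Rightarrow> ereal" where
  "sumPI n S f = Inf {Sup (insert 0 {pairval n p x y | x y. x \<in> S \<and> y \<in> S \<and> f x \<noteq> f y}) | p.
                        prob_family n S p}"

end

theory Submission
  imports Defs
begin

text \<open>
  A formula \<phi> induces, for every input x, a probability distribution var_distr \<phi> x on its
  variables: a literal puts all mass on its variable, a gate whose value is forced by one child
  follows that child, and otherwise the gate averages its children's distributions weighted by
  their numbers of leaves. By induction on \<phi>, if \<phi> x \<noteq> \<phi> y then some variable i with
  x_i \<noteq> y_i has var_distr \<phi> x i * var_distr \<phi> y i \<ge> 1 / L(\<phi>).
  Averaging these distributions over an \<epsilon>-approximation by formulas of size at most s gives an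
  admissible family for sumPI: when f x \<noteq> f y, the formulas correct at both x and y have mass
  at least 1 - 2\<epsilon>, each of them contributes at least 1 / sqrt s to the sum over the
  disagreeing i of sqrt (var_distr \<phi> x i * var_distr \<phi> y i), and Cauchy-Schwarz passes this
  bound on to the average. Hence sumPI f \<le> sqrt s / (1 - 2\<epsilon>).
  Only the values on the finite set S matter, so the approximating distribution may be taken
  finitely supported and all averages are finite sums.
\<close>

fun var_distr :: "form \<Rightarrow> bool list \<Rightarrow> nat \<Rightarrow> real" where
  "var_distr (Lit j b) x i = (if i = j then 1 else 0)"
| "var_distr (FAnd a c) x i = (if evalf a x \<and> evalf c x
      then (real (leaves a) * var_distr a x i + real (leaves c) * var_distr c x i)
           / real (leaves a + leaves c)
      else if \<not> evalf a x then var_distr a x i else var_distr c x i)"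
| "var_distr (FOr a c) x i = (if \<not> evalf a x \<and> \<not> evalf c x
      then (real (leaves a) * var_distr a x i + real (leaves c) * var_distr c x i)
           / real (leaves a + leaves c)
      else if evalf a x then var_distr a x i else var_distr c x i)"

lemma leaves_ge_1: "1 \<le> leaves \<phi>"
  by (induction \<phi>) auto

lemma var_distr_nonneg: "0 \<le> var_distr \<phi> x i"
  by (induction \<phi>) auto

lemma sum_var_distr:
  assumes "\<forall>i\<in>vars \<phi>. i < n"
  shows "(\<Sum>i<n. var_distr \<phi> x i) = 1"
  using assms
proof (induction \<phi>)
  case (Lit j b)
  then show ?case by simp
next
  case (FAnd a c)
  have "(\<Sum>i<n. (real (leaves a) * var_distr a x i + real (leaves c) * var_distr c x i)
          / real (leaves a + leaves c)) = 1"
    using FAnd leaves_ge_1[of a]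
    by (simp add: sum_divide_distrib[symmetric] sum.distrib sum_distrib_left[symmetric])
  then show ?case using FAnd by (cases "evalf a x"; cases "evalf c x") simp_all
next
  case (FOr a c)
  have "(\<Sum>i<n. (real (leaves a) * var_distr a x i + real (leaves c) * var_distr c x i)
          / real (leaves a + leaves c)) = 1"
    using FOr leaves_ge_1[of a]
    by (simp add: sum_divide_distrib[symmetric] sum.distrib sum_distrib_left[symmetric])
  then show ?case using FOr by (cases "evalf a x"; cases "evalf c x") simp_all
qed

lemma leaf_weighted_ge:
  assumes "d \<in> {a, c}"
  shows "real (leaves d) * var_distr d x i
           \<le> real (leaves a) * var_distr a x i + real (leaves c) * var_distr c x i"
  using assms var_distr_nonneg[of a x i] var_distr_nonneg[of c x i] by auto

lemma var_distr_FAnd_ge: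
  assumes "evalf a y" "evalf c y" "d \<in> {a, c}"
  shows "real (leaves d) * var_distr d y i / real (leaves (FAnd a c)) \<le> var_distr (FAnd a c) y i"
  using assms leaf_weighted_ge[OF assms(3), of y i] by (simp add: divide_right_mono)

lemma var_distr_FOr_ge:
  assumes "\<not> evalf a x" "\<not> evalf c x" "d \<in> {a, c}"
  shows "real (leaves d) * var_distr d x i / real (leaves (FOr a c)) \<le> var_distr (FOr a c) x i"
  using assms leaf_weighted_ge[OF assms(3), of x i] by (simp add: divide_right_mono)

lemma rescaled_product_lower_bound:
  fixes l L u v v' :: real
  assumes "0 < l" "l \<le> L" "0 \<le> u" "1 / l \<le> u * v" "l * v / L \<le> v'"
  shows "1 / L \<le> u * v'"
proof -
  have "1 / L = l * (1 / l) / L" using assms(1) by simp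
  also have "\<dots> \<le> l * (u * v) / L"
    using assms by (intro divide_right_mono mult_left_mono) auto
  also have "\<dots> = u * (l * v / L)" by simp
  also have "\<dots> \<le> u * v'" using assms(5,3) by (rule mult_left_mono)
  finally show ?thesis .
qed

lemma var_distr_witness_false_true:
  "\<not> evalf \<phi> x \<Longrightarrow> evalf \<phi> y \<Longrightarrow>
   \<exists>i\<in>vars \<phi>. x ! i \<noteq> y ! i \<and> 1 / real (leaves \<phi>) \<le> var_distr \<phi> x i * var_distr \<phi> y i"
proof (induction \<phi>)
  case (Lit j b)
  then show ?case by (cases b) auto
next
  case (FAnd a c)
  define d where "d = (if evalf a x then c else a)"
  have d: "d \<in> {a, c}" "\<not> evalf d x" "\<And>i. var_distr (FAnd a c) x i = var_distr d x i"
    using FAnd.prems by (auto simp: d_def)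
  have y: "evalf a y" "evalf c y" using FAnd.prems by auto
  obtain i where i: "i \<in> vars d" "x ! i \<noteq> y ! i"
    "1 / real (leaves d) \<le> var_distr d x i * var_distr d y i"
    using FAnd.IH d(1,2) y by blast
  have "real (leaves d) \<le> real (leaves (FAnd a c))" using d(1) by auto
  then have "1 / real (leaves (FAnd a c)) \<le> var_distr d x i * var_distr (FAnd a c) y i"
    using leaves_ge_1[of d]
    by (intro rescaled_product_lower_bound[OF _ _ var_distr_nonneg i(3) var_distr_FAnd_ge[OF y d(1)]])
      auto
  then have "1 / real (leaves (FAnd a c)) \<le> var_distr (FAnd a c) x i * var_distr (FAnd a c) y i"
    by (simp only: d(3))
  moreover have "i \<in> vars (FAnd a c)" using d(1) i(1) by auto
  ultimately show ?case using i(2) by blast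
next
  case (FOr a c)
  define d where "d = (if evalf a y then a else c)"
  have d: "d \<in> {a, c}" "evalf d y" "\<And>i. var_distr (FOr a c) y i = var_distr d y i"
    using FOr.prems by (auto simp: d_def)
  have x: "\<not> evalf a x" "\<not> evalf c x" using FOr.prems by auto
  obtain i where i: "i \<in> vars d" "x ! i \<noteq> y ! i"
    "1 / real (leaves d) \<le> var_distr d x i * var_distr d y i"
    using FOr.IH d(1,2) x by blast
  then have i': "1 / real (leaves d) \<le> var_distr d y i * var_distr d x i"
    by (simp only: mult.commute)
  have "real (leaves d) \<le> real (leaves (FOr a c))" using d(1) by auto
  then have "1 / real (leaves (FOr a c)) \<le> var_distr d y i * var_distr (FOr a c) x i"
    using leaves_ge_1[of d]
    by (intro rescaled_product_lower_bound[OF _ _ var_distr_nonneg i' var_distr_FOr_ge[OF x d(1)]])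
      auto
  then have "1 / real (leaves (FOr a c)) \<le> var_distr (FOr a c) x i * var_distr (FOr a c) y i"
    by (simp only: d(3) mult.commute)
  moreover have "i \<in> vars (FOr a c)" using d(1) i(1) by auto
  ultimately show ?case using i(2) by blast
qed

lemma var_distr_witness:
  assumes "evalf \<phi> x \<noteq> evalf \<phi> y"
  shows "\<exists>i\<in>vars \<phi>. x ! i \<noteq> y ! i \<and> 1 / real (leaves \<phi>) \<le> var_distr \<phi> x i * var_distr \<phi> y i"
proof (cases "evalf \<phi> y")
  case True
  then show ?thesis using assms var_distr_witness_false_true by blast
next
  case False
  then show ?thesis using assms var_distr_witness_false_true[of \<phi> y x] by (auto simp: mult.commute)
qed

lemma sum_weighted_sqrt_le:
  fixes w a b :: "'h \<Rightarrow> real"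
  assumes "\<And>h. h \<in> G \<Longrightarrow> 0 \<le> w h" "\<And>h. h \<in> G \<Longrightarrow> 0 \<le> a h" "\<And>h. h \<in> G \<Longrightarrow> 0 \<le> b h"
  shows "(\<Sum>h\<in>G. w h * sqrt (a h * b h)) \<le> sqrt ((\<Sum>h\<in>G. w h * a h) * (\<Sum>h\<in>G. w h * b h))"
proof -
  have split: "w h * sqrt (a h * b h) = sqrt (w h * a h) * sqrt (w h * b h)" if "h \<in> G" for h
    using assms(1)[OF that] by (simp add: real_sqrt_mult)
  have "(\<Sum>h\<in>G. sqrt (w h * a h) * sqrt (w h * b h))\<^sup>2
          \<le> (\<Sum>h\<in>G. (sqrt (w h * a h))\<^sup>2) * (\<Sum>h\<in>G. (sqrt (w h * b h))\<^sup>2)"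
    by (rule Cauchy_Schwarz_ineq_sum)
  also have "\<dots> = (\<Sum>h\<in>G. w h * a h) * (\<Sum>h\<in>G. w h * b h)"
    using assms by (intro arg_cong2[where f = "(*)"] sum.cong) auto
  finally show ?thesis
    by (simp only: sum.cong[OF refl split]) (rule real_le_rsqrt)
qed

lemma sum_sqrt_mixture_ge:
  fixes w :: "'h \<Rightarrow> real" and a b :: "'h \<Rightarrow> nat \<Rightarrow> real"
  assumes "finite G" "finite D" "Good \<subseteq> G"
    and "\<And>h. h \<in> G \<Longrightarrow> 0 \<le> w h" "\<And>h i. 0 \<le> a h i" "\<And>h i. 0 \<le> b h i"
    and "c \<le> (\<Sum>h\<in>Good. w h)" "0 < s"
    and "\<And>h. h \<in> Good \<Longrightarrow> \<exists>i\<in>D. 1 / s \<le> a h i * b h i"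
  shows "c / sqrt s \<le> (\<Sum>i\<in>D. sqrt ((\<Sum>h\<in>G. w h * a h i) * (\<Sum>h\<in>G. w h * b h i)))"
proof -
  have sqrt_ge: "1 / sqrt s \<le> (\<Sum>i\<in>D. sqrt (a h i * b h i))" if "h \<in> Good" for h
  proof -
    obtain i where i: "i \<in> D" "1 / s \<le> a h i * b h i" using assms(9) \<open>h \<in> Good\<close> by blast
    have "1 / sqrt s = sqrt (1 / s)" by (simp add: real_sqrt_divide)
    also have "\<dots> \<le> sqrt (a h i * b h i)" using i(2) by simp
    also have "\<dots> \<le> (\<Sum>i\<in>D. sqrt (a h i * b h i))"
      using i(1) assms(2,5,6) by (intro member_le_sum) auto
    finally show ?thesis .
  qed
  have "c / sqrt s \<le> (\<Sum>h\<in>Good. w h) / sqrt s"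
    using assms(7,8) by (simp add: divide_right_mono)
  also have "\<dots> = (\<Sum>h\<in>Good. w h * (1 / sqrt s))" by (simp add: sum_divide_distrib)
  also have "\<dots> \<le> (\<Sum>h\<in>Good. w h * (\<Sum>i\<in>D. sqrt (a h i * b h i)))"
    using assms(3,4) sqrt_ge by (intro sum_mono mult_left_mono) auto
  also have "\<dots> \<le> (\<Sum>h\<in>G. w h * (\<Sum>i\<in>D. sqrt (a h i * b h i)))"
    using assms(1,3,4,5,6) by (intro sum_mono2) (auto intro!: sum_nonneg mult_nonneg_nonneg)
  also have "\<dots> = (\<Sum>i\<in>D. \<Sum>h\<in>G. w h * sqrt (a h i * b h i))"
    by (simp add: sum_distrib_left sum.swap[of _ G D])
  also have "\<dots> \<le> (\<Sum>i\<in>D. sqrt ((\<Sum>h\<in>G. w h * a h i) * (\<Sum>h\<in>G. w h * b h i)))"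
    using assms(4,5,6) by (intro sum_mono sum_weighted_sqrt_le) auto
  finally show ?thesis .
qed

lemma measure_pmf_prob_Int_ge:
  "measure_pmf.prob p A + measure_pmf.prob p B - 1 \<le> measure_pmf.prob p (A \<inter> B)"
proof -
  have "measure_pmf.prob p (A \<union> B)
          = measure_pmf.prob p A + measure_pmf.prob p B - measure_pmf.prob p (A \<inter> B)"
    by (rule measure_Un3) (auto simp: measure_pmf.fmeasurable_eq_sets)
  then show ?thesis using measure_pmf.prob_le_1[of p "A \<union> B"] by linarith
qed

lemma measure_pmf_prob_finite_support:
  "finite (set_pmf p) \<Longrightarrow> measure_pmf.prob p A = (\<Sum>h\<in>set_pmf p \<inter> A. pmf p h)"
  by (metis measure_Int_set_pmf measure_measure_pmf_finite finite_Int Int_commute)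

lemma pmf_restrict_finite_domain:
  fixes \<alpha> :: "('a \<Rightarrow> bool) pmf"
  assumes "finite S"
  obtains \<beta> where "finite (set_pmf \<beta>)"
    and "\<And>h. h \<in> set_pmf \<beta> \<Longrightarrow> \<exists>g\<in>set_pmf \<alpha>. \<forall>x\<in>S. h x = g x"
    and "\<And>x b. x \<in> S \<Longrightarrow> measure_pmf.prob \<beta> {h. b = h x} = measure_pmf.prob \<alpha> {g. b = g x}"
proof
  define r where "r g = (\<lambda>x. x \<in> {x\<in>S. g x})" for g :: "'a \<Rightarrow> bool"
  have "r g \<in> (\<lambda>T x. x \<in> T) ` Pow S" for g
    unfolding r_def by (rule image_eqI[OF refl]) auto
  then have "set_pmf (map_pmf r \<alpha>) \<subseteq> (\<lambda>T x. x \<in> T) ` Pow S"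
    by auto
  then show "finite (set_pmf (map_pmf r \<alpha>))"
    using assms by (meson finite_Pow_iff finite_imageI finite_subset)
  show "\<exists>g\<in>set_pmf \<alpha>. \<forall>x\<in>S. h x = g x" if "h \<in> set_pmf (map_pmf r \<alpha>)" for h
    using that by (auto simp: r_def)
  show "measure_pmf.prob (map_pmf r \<alpha>) {h. b = h x} = measure_pmf.prob \<alpha> {g. b = g x}"
    if "x \<in> S" for x b
    using that by (simp add: vimage_def r_def)
qed

lemma formL_cong: "(\<And>x. x \<in> S \<Longrightarrow> g x = h x) \<Longrightarrow> formL n S g = formL n S h"
  unfolding formL_def by simp

lemma formL_le_enatE:
  assumes "formL n S g \<le> enat s"
  obtains \<phi> where "\<forall>i\<in>vars \<phi>. i < n" "\<forall>x\<in>S. evalf \<phi> x = g x" "leaves \<phi> \<le> s"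
proof -
  let ?A = "{enat (leaves \<phi>) | \<phi>. (\<forall>i\<in>vars \<phi>. i < n) \<and> (\<forall>x\<in>S. evalf \<phi> x = g x)}"
  have "?A \<noteq> {}"
  proof
    assume "?A = {}"
    then have "Inf ?A = \<infinity>" by (simp only: Inf_empty top_enat_def)
    with assms show False unfolding formL_def by simp
  qed
  then have "Inf ?A \<in> ?A" by (meson equals0I wellorder_InfI)
  then show ?thesis using that assms unfolding formL_def by auto
qed

lemma formLeps_enatE:
  assumes "formLeps n S \<epsilon> f = enat s"
  obtains \<alpha> where "\<forall>g\<in>set_pmf \<alpha>. formL n S g \<le> enat s"
    and "\<forall>x\<in>S. 1 - \<epsilon> \<le> measure_pmf.prob \<alpha> {g. f x = g x}"
proof -
  let ?A = "{enat s | s. \<exists>\<alpha> :: (bool list \<Rightarrow> bool) pmf.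
      (\<forall>g\<in>set_pmf \<alpha>. formL n S g \<le> enat s) \<and>
      (\<forall>x\<in>S. measure_pmf.prob \<alpha> {g. f x = g x} \<ge> 1 - \<epsilon>)}"
  have "?A \<noteq> {}"
  proof
    assume "?A = {}"
    then have "Inf ?A = \<infinity>" by (simp only: Inf_empty top_enat_def)
    with assms show False unfolding formLeps_def by simp
  qed
  then have "Inf ?A \<in> ?A" by (meson equals0I wellorder_InfI)
  then show ?thesis using that assms unfolding formLeps_def by auto
qed

lemma pairval_le:
  assumes "0 < c" "c \<le> (\<Sum>i\<in>{i. i < n \<and> x ! i \<noteq> y ! i}. sqrt (p x i * p y i))"
  shows "pairval n p x y \<le> ereal (1 / c)"
  using assms unfolding pairval_def Let_def by (auto intro: divide_left_mono)

lemma sumPI_nonneg: "0 \<le> sumPI n S f"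
  unfolding sumPI_def by (auto intro!: Inf_greatest Sup_upper)

lemma sumPI_le:
  assumes "prob_family n S p" "0 \<le> T"
    and "\<And>x y. x \<in> S \<Longrightarrow> y \<in> S \<Longrightarrow> f x \<noteq> f y \<Longrightarrow> pairval n p x y \<le> T"
  shows "sumPI n S f \<le> T"
proof -
  have "Sup (insert 0 {pairval n p x y | x y. x \<in> S \<and> y \<in> S \<and> f x \<noteq> f y}) \<le> T"
    using assms(2,3) by (auto intro!: Sup_least)
  then show ?thesis unfolding sumPI_def using assms(1) by (intro Inf_lower2) auto
qed

definition mixed_var_distr :: "'h pmf \<Rightarrow> ('h \<Rightarrow> form) \<Rightarrow> bool list \<Rightarrow> nat \<Rightarrow> real" where
  "mixed_var_distr \<beta> \<phi> x i = (\<Sum>h\<in>set_pmf \<beta>. pmf \<beta> h * var_distr (\<phi> h) x i)"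

lemma prob_family_mixed_var_distr:
  assumes "finite (set_pmf \<beta>)" "\<And>h. h \<in> set_pmf \<beta> \<Longrightarrow> \<forall>i\<in>vars (\<phi> h). i < n"
  shows "prob_family n S (mixed_var_distr \<beta> \<phi>)"
  unfolding prob_family_def
proof (intro ballI conjI allI impI)
  fix x i
  show "0 \<le> mixed_var_distr \<beta> \<phi> x i"
    unfolding mixed_var_distr_def by (auto intro!: sum_nonneg mult_nonneg_nonneg var_distr_nonneg)
  have "(\<Sum>i<n. mixed_var_distr \<beta> \<phi> x i) = (\<Sum>h\<in>set_pmf \<beta>. pmf \<beta> h * (\<Sum>i<n. var_distr (\<phi> h) x i))"
    unfolding mixed_var_distr_def by (simp add: sum_distrib_left sum.swap[of _ "set_pmf \<beta>"])
  also have "\<dots> = (\<Sum>h\<in>set_pmf \<beta>. pmf \<beta> h)" using assms(2) sum_var_distr by simp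
  also have "\<dots> = 1" using assms(1) by (rule sum_pmf_eq_1) simp
  finally show "(\<Sum>i<n. mixed_var_distr \<beta> \<phi> x i) = 1" .
qed

lemma pairval_mixed_var_distr_le:
  fixes \<beta> :: "(bool list \<Rightarrow> bool) pmf"
  assumes fin: "finite (set_pmf \<beta>)" and "\<epsilon> < 1/2" and "1 \<le> s"
    and \<phi>: "\<And>h. h \<in> set_pmf \<beta> \<Longrightarrow>
      (\<forall>i\<in>vars (\<phi> h). i < n) \<and> (\<forall>x\<in>S. evalf (\<phi> h) x = h x) \<and> leaves (\<phi> h) \<le> s"
    and x: "x \<in> S" "1 - \<epsilon> \<le> measure_pmf.prob \<beta> {h. f x = h x}"
    and y: "y \<in> S" "1 - \<epsilon> \<le> measure_pmf.prob \<beta> {h. f y = h y}"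
    and "f x \<noteq> f y"
  shows "pairval n (mixed_var_distr \<beta> \<phi>) x y \<le> ereal (sqrt s / (1 - 2 * \<epsilon>))"
proof -
  have s: "1 \<le> real s" using \<open>1 \<le> s\<close> by simp
  define D where "D = {i. i < n \<and> x ! i \<noteq> y ! i}"
  let ?Good = "set_pmf \<beta> \<inter> ({h. f x = h x} \<inter> {h. f y = h y})"
  have "1 - 2 * \<epsilon> \<le> (\<Sum>h\<in>?Good. pmf \<beta> h)"
    using measure_pmf_prob_Int_ge[of \<beta> "{h. f x = h x}" "{h. f y = h y}"] x(2) y(2)
    by (simp add: measure_pmf_prob_finite_support[OF fin])
  moreover have "\<exists>i\<in>D. 1 / real s \<le> var_distr (\<phi> h) x i * var_distr (\<phi> h) y i"
    if "h \<in> ?Good" for h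
  proof -
    have "evalf (\<phi> h) x \<noteq> evalf (\<phi> h) y" using \<phi> that x(1) y(1) \<open>f x \<noteq> f y\<close> by auto
    then obtain i where "i \<in> vars (\<phi> h)" "x ! i \<noteq> y ! i"
        "1 / real (leaves (\<phi> h)) \<le> var_distr (\<phi> h) x i * var_distr (\<phi> h) y i"
      using var_distr_witness by blast
    moreover have "real (leaves (\<phi> h)) \<le> real s" using \<phi> that by simp
    then have "1 / real s \<le> 1 / real (leaves (\<phi> h))"
      using leaves_ge_1[of "\<phi> h"] by (intro frac_le) auto
    ultimately show ?thesis using \<phi> that unfolding D_def by force
  qed
  ultimately have "(1 - 2 * \<epsilon>) / sqrt s \<le> (\<Sum>i\<in>D. sqrt (mixed_var_distr \<beta> \<phi> x i * mixed_var_distr \<beta> \<phi> y i))"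
    unfolding mixed_var_distr_def using fin s
    by (intro sum_sqrt_mixture_ge[where Good = ?Good]) (auto simp: D_def var_distr_nonneg)
  then show ?thesis
    using pairval_le[of "(1 - 2 * \<epsilon>) / sqrt s"] s \<open>\<epsilon> < 1/2\<close> unfolding D_def by simp
qed

lemma sumPI_le_formula_mixture:
  fixes \<beta> :: "(bool list \<Rightarrow> bool) pmf"
  assumes fin: "finite (set_pmf \<beta>)" and "\<epsilon> < 1/2"
    and size: "\<And>h. h \<in> set_pmf \<beta> \<Longrightarrow> formL n S h \<le> enat s"
    and agree: "\<And>x. x \<in> S \<Longrightarrow> 1 - \<epsilon> \<le> measure_pmf.prob \<beta> {h. f x = h x}"
  shows "sumPI n S f \<le> ereal (sqrt s / (1 - 2 * \<epsilon>))"
proof -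
  have "\<exists>\<phi>. (\<forall>i\<in>vars \<phi>. i < n) \<and> (\<forall>x\<in>S. evalf \<phi> x = h x) \<and> leaves \<phi> \<le> s"
    if "h \<in> set_pmf \<beta>" for h
    by (rule formL_le_enatE[OF size[OF that]]) blast
  then obtain \<phi> where \<phi>: "\<And>h. h \<in> set_pmf \<beta> \<Longrightarrow>
      (\<forall>i\<in>vars (\<phi> h). i < n) \<and> (\<forall>x\<in>S. evalf (\<phi> h) x = h x) \<and> leaves (\<phi> h) \<le> s"
    by metis
  obtain h0 where "h0 \<in> set_pmf \<beta>" using set_pmf_not_empty[of \<beta>] by blast
  then have "1 \<le> s" using \<phi>[of h0] leaves_ge_1[of "\<phi> h0"] by simp
  show ?thesis
  proof (rule sumPI_le)
    show "prob_family n S (mixed_var_distr \<beta> \<phi>)"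
      using fin \<phi> by (intro prob_family_mixed_var_distr) auto
    show "pairval n (mixed_var_distr \<beta> \<phi>) x y \<le> ereal (sqrt s / (1 - 2 * \<epsilon>))"
      if "x \<in> S" "y \<in> S" "f x \<noteq> f y" for x y
      using that agree[of x] agree[of y]
      by (intro pairval_mixed_var_distr_le[OF fin \<open>\<epsilon> < 1/2\<close> \<open>1 \<le> s\<close> \<phi>]) auto
  qed (use \<open>\<epsilon> < 1/2\<close> in simp)
qed

lemma ereal_scaled_square_le:
  assumes "0 < c" "0 \<le> X" "X \<le> ereal (sqrt s / c)" "0 \<le> s"
  shows "(ereal c * X) ^ 2 \<le> ereal s"
proof -
  obtain t where t: "X = ereal t" "0 \<le> t" "t \<le> sqrt s / c"
    using assms(2,3) by (cases X) auto
  have "(c * t) ^ 2 \<le> (c * (sqrt s / c)) ^ 2"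
    using assms(1) t by (intro power_mono mult_left_mono) auto
  also have "\<dots> = s" using assms(1,4) by simp
  finally show ?thesis using t(1) by simp
qed

theorem mainTheorem2:
  fixes n :: nat and S :: "bool list set" and f :: "bool list \<Rightarrow> bool" and \<epsilon> :: real
  assumes "S \<subseteq> {x. length x = n}"
    and "\<epsilon> < 1/2"
  shows "ereal_of_enat (formLeps n S \<epsilon> f) \<ge> (ereal (1 - 2 * \<epsilon>) * sumPI n S f) ^ 2"
proof (cases "formLeps n S \<epsilon> f")
  case (enat s)
  obtain \<alpha> where \<alpha>: "\<forall>g\<in>set_pmf \<alpha>. formL n S g \<le> enat s"
    "\<forall>x\<in>S. 1 - \<epsilon> \<le> measure_pmf.prob \<alpha> {g. f x = g x}"
    using formLeps_enatE[OF enat] by blast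
  have "finite S"
    using assms(1) finite_lists_length_eq[of "UNIV :: bool set" n] by (simp add: finite_subset)
  obtain \<beta> where \<beta>: "finite (set_pmf \<beta>)"
    "\<And>h. h \<in> set_pmf \<beta> \<Longrightarrow> \<exists>g\<in>set_pmf \<alpha>. \<forall>x\<in>S. h x = g x"
    "\<And>x b. x \<in> S \<Longrightarrow> measure_pmf.prob \<beta> {h. b = h x} = measure_pmf.prob \<alpha> {g. b = g x}"
    using pmf_restrict_finite_domain[OF \<open>finite S\<close>, of \<alpha>] by metis
  have "formL n S h \<le> enat s" if "h \<in> set_pmf \<beta>" for h
    using \<beta>(2)[OF that] \<alpha>(1) formL_cong[of S h _ n] by metis
  then have "sumPI n S f \<le> ereal (sqrt s / (1 - 2 * \<epsilon>))"
    using \<beta>(1,3) \<alpha>(2) assms(2) by (intro sumPI_le_formula_mixture) auto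
  then show ?thesis
    using enat assms(2) sumPI_nonneg by (simp add: ereal_scaled_square_le)
next
  case infinity
  then show ?thesis by simp
qed

end
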